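(* Let $f\not\equiv 0$ be given by a Taylor series $f(z)=\sum_{k\ge0}a_kz^k$ with radius of convergence $R\in(0,\infty]$. For $0<r<R$ let $M_1(r)=\frac{1}{2\pi}\int_0^{2\pi}|f(re^{i\theta})|\,d\theta$ and, for $n$ with $a_n\neq0$, let $\kappa(n,r)=\dfrac{M_1(r)}{|a_n|r^n}$. Then, for every $n$ with $a_n\ne 0$ and for $0<r<R$: (a) $\kappa(n,r)$ is continuously differentiable with respect to $r$; (b) $\log\kappa(n,r)$ is a convex function of $\log r$.
   Context: $\kappa(n,r)$ equals the condition number $\int_0^{2\pi}|f(re^{i\theta})|d\theta\,/\,\big|\int_0^{2\pi}e^{-in\theta}f(re^{i\theta})d\theta\big|$ of the Cauchy integral for the $n$-th Taylor coefficient. *)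

theory Defs
  imports "HOL-Analysis.Analysis"
begin

definition taylor_fun :: "(nat \<Rightarrow> complex) \<Rightarrow> complex \<Rightarrow> complex" where
  "taylor_fun a z = (\<Sum>k. a k * z ^ k)"

definition M1 :: "(nat \<Rightarrow> complex) \<Rightarrow> real \<Rightarrow> real" where
  "M1 a r = (1 / (2 * pi)) *
     integral {0..2*pi} (\<lambda>\<theta>. cmod (taylor_fun a (complex_of_real r * exp (\<i> * complex_of_real \<theta>))))"

definition kappa :: "(nat \<Rightarrow> complex) \<Rightarrow> nat \<Rightarrow> real \<Rightarrow> real" where
  "kappa a n r = M1 a r / (cmod (a n) * r ^ n)"

end

theory Submission
  imports Defs "HOL-Complex_Analysis.Complex_Analysis"
begin

text \<open>
  The mean modulus is the value of a dual problem. For a measurable weight \<open>\<phi>\<close> with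
  \<open>|\<phi>| \<le> 1\<close>, the function \<open>\<Phi>(z) = \<integral> f(z e\<^sup>i\<^sup>\<theta>) \<phi>(\<theta>) d\<theta>\<close> is a power series of radius at
  least \<open>R\<close> with \<open>|\<Phi>(z)| \<le> 2\<pi> M\<^sub>1(|z|)\<close>, and equality holds at \<open>z = r\<close> for
  \<open>\<phi> = sgn (conj f(r e\<^sup>i\<^sup>\<theta>))\<close>. The maximum modulus principle on an annulus, applied to
  \<open>\<Phi>\<^sup>q z\<^sup>p\<close>, therefore gives the three-circles inequality
  \<open>M\<^sub>1(r)\<^sup>q r\<^sup>p \<le> max (M\<^sub>1(r\<^sub>1)\<^sup>q r\<^sub>1\<^sup>p) (M\<^sub>1(r\<^sub>2)\<^sup>q r\<^sub>2\<^sup>p)\<close>. Hence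
  \<open>ln M\<^sub>1(e\<^sup>t) + \<beta> t\<close> obeys the maximum principle on intervals for every rational \<open>\<beta>\<close>, which
  forces convexity in \<open>t\<close>; \<open>ln \<kappa>\<close> differs from it by an affine function of \<open>t\<close>.

  For differentiability, \<open>r \<mapsto> |f(r e\<^sup>i\<^sup>\<theta>)|\<close> is locally Lipschitz and is differentiable
  except where \<open>f\<close> vanishes on the circle, which happens for a negligible set of \<open>\<theta>\<close>
  since \<open>f \<noteq> 0\<close> has finitely many zeros there; its derivative is bounded by \<open>max |f'|\<close>, so
  dominated convergence differentiates \<open>M\<^sub>1\<close> under the integral sign and shows that the
  derivative is continuous.
\<close>

lemma negligible_countable:
  fixes S :: "'a::euclidean_space set"
  assumes "countable S"
  shows "negligible S"
  using assms by (simp add: negligible_iff_null_sets null_sets_completionI countable_imp_null_set_lborel)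

lemma dominated_convergence_ae:
  fixes f :: "nat \<Rightarrow> 'n::euclidean_space \<Rightarrow> 'm::euclidean_space"
  assumes f: "\<And>k. f k integrable_on S" and h: "h integrable_on S" and N: "negligible N"
    and le: "\<And>k x. x \<in> S - N \<Longrightarrow> norm (f k x) \<le> h x"
    and conv: "\<And>x. x \<in> S - N \<Longrightarrow> (\<lambda>k. f k x) \<longlonglongrightarrow> g x"
  shows "g integrable_on S" "(\<lambda>k. integral S (f k)) \<longlonglongrightarrow> integral S g"
proof -
  have N': "negligible ((S - (S - N)) \<union> ((S - N) - S))"
    by (rule negligible_subset[OF N]) auto
  have int_iff: "F integrable_on S \<longleftrightarrow> F integrable_on S - N" for F :: "'n \<Rightarrow> 'm"
    by (rule integrable_spike_set_eq[OF N'])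
  have hN: "h integrable_on S - N"
    using integrable_spike_set_eq[OF N'] h by blast
  have integral_eq: "integral S F = integral (S - N) F" for F :: "'n \<Rightarrow> 'm"
    by (rule integral_spike_set) (auto intro: negligible_subset[OF N])
  have "g integrable_on S - N" "(\<lambda>k. integral (S - N) (f k)) \<longlonglongrightarrow> integral (S - N) g"
    using dominated_convergence[of f "S - N" h g] f hN le conv int_iff by auto
  then show "g integrable_on S" "(\<lambda>k. integral S (f k)) \<longlonglongrightarrow> integral S g"
    by (simp_all add: int_iff integral_eq)
qed

lemma isCont_integral_param_ae:
  fixes k :: "'p::metric_space \<Rightarrow> 'n::euclidean_space \<Rightarrow> 'm::euclidean_space"
  assumes I: "open I" "x0 \<in> I"
    and int: "\<And>x. x \<in> I \<Longrightarrow> k x integrable_on S" and g: "g integrable_on S"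
    and N: "negligible N"
    and le: "\<And>x t. x \<in> I \<Longrightarrow> t \<in> S - N \<Longrightarrow> norm (k x t) \<le> g t"
    and lim: "\<And>t. t \<in> S - N \<Longrightarrow> ((\<lambda>x. k x t) \<longlongrightarrow> k x0 t) (at x0)"
  shows "isCont (\<lambda>x. integral S (k x)) x0"
proof -
  have "((\<lambda>x. integral S (k x)) \<longlongrightarrow> integral S (k x0)) (at x0 within I)"
    unfolding tendsto_at_iff_sequentially
  proof (intro allI impI)
    fix X assume X: "\<forall>i. X i \<in> I - {x0}" "X \<longlonglongrightarrow> x0"
    have "(\<lambda>i. k (X i) t) \<longlonglongrightarrow> k x0 t" if "t \<in> S - N" for t
      using lim[OF that] X unfolding tendsto_at_iff_sequentially o_def by auto
    then show "((\<lambda>x. integral S (k x)) \<circ> X) \<longlonglongrightarrow> integral S (k x0)"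
      using dominated_convergence_ae(2)[of "\<lambda>i. k (X i)" S g N "k x0"] int g N le X
      by (simp add: o_def)
  qed
  then show ?thesis
    using at_within_open[OF I(2,1)] by (simp add: isCont_def)
qed

lemma has_real_derivative_integral_param_ae:
  fixes h :: "real \<Rightarrow> 'n::euclidean_space \<Rightarrow> real"
  assumes I: "open I" "x0 \<in> I"
    and int: "\<And>x. x \<in> I \<Longrightarrow> h x integrable_on S" and L: "L integrable_on S"
    and N: "negligible N"
    and lip: "\<And>x t. x \<in> I \<Longrightarrow> t \<in> S - N \<Longrightarrow> \<bar>h x t - h x0 t\<bar> \<le> L t * \<bar>x - x0\<bar>"
    and der: "\<And>t. t \<in> S - N \<Longrightarrow> ((\<lambda>x. h x t) has_real_derivative g t) (at x0)"
  shows "g integrable_on S"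
    and "((\<lambda>x. integral S (h x)) has_real_derivative integral S g) (at x0)"
proof -
  define Q where "Q x t = (h x t - h x0 t) / (x - x0)" for x t
  have quotients: "g integrable_on S \<and> (\<lambda>i. integral S (Q (X i))) \<longlonglongrightarrow> integral S g"
    if X: "\<forall>i. X i \<in> I - {x0}" "X \<longlonglongrightarrow> x0" for X
  proof -
    have "Q (X i) integrable_on S" for i
      unfolding Q_def using X int I(2) by (intro integrable_on_divide integrable_diff) auto
    moreover have "norm (Q (X i) t) \<le> L t" if "t \<in> S - N" for i t
      using lip[of "X i" t] X that by (auto simp: Q_def divide_le_eq)
    moreover have "(\<lambda>i. Q (X i) t) \<longlonglongrightarrow> g t" if "t \<in> S - N" for t
      using der[OF that] X unfolding has_field_derivative_iff tendsto_at_iff_sequentially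
      by (auto simp: Q_def o_def)
    ultimately show ?thesis
      using dominated_convergence_ae[of "\<lambda>i. Q (X i)" S L N g] L N by blast
  qed
  obtain X where "\<forall>i. X i \<in> I - {x0}" "X \<longlonglongrightarrow> x0"
    using islimpt_sequential interior_limit_point I interior_open by metis
  then show "g integrable_on S" using quotients by blast
  have "((\<lambda>y. (integral S (h y) - integral S (h x0)) / (y - x0)) \<longlongrightarrow> integral S g) (at x0 within I)"
    unfolding tendsto_at_iff_sequentially
  proof (intro allI impI)
    fix X assume X: "\<forall>i. X i \<in> I - {x0}" "X \<longlonglongrightarrow> x0"
    have "integral S (Q (X i)) = (integral S (h (X i)) - integral S (h x0)) / (X i - x0)" for i
      unfolding Q_def using X int I(2) by (simp add: integral_diff)
    then show "((\<lambda>y. (integral S (h y) - integral S (h x0)) / (y - x0)) \<circ> X) \<longlonglongrightarrow> integral S g"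
      using quotients[OF X] by (simp add: o_def)
  qed
  then show "((\<lambda>x. integral S (h x)) has_real_derivative integral S g) (at x0)"
    using at_within_open[OF I(2,1)] by (simp add: has_field_derivative_iff)
qed

lemma has_integral_suminf_bounded:
  fixes f :: "nat \<Rightarrow> 'n::ordered_euclidean_space \<Rightarrow> 'm::euclidean_space"
  assumes f: "\<And>k. (f k has_integral I k) {a..b}"
    and le: "\<And>k x. x \<in> {a..b} \<Longrightarrow> norm (f k x) \<le> c k" and c: "summable c"
  shows "((\<lambda>x. \<Sum>k. f k x) has_integral (\<Sum>k. I k)) {a..b}"
proof -
  define P where "P N x = (\<Sum>k<N. f k x)" for N x
  have summable_f: "summable (\<lambda>k. norm (f k x))" if "x \<in> {a..b}" for x
    using le[OF that] by (intro summable_comparison_test[OF _ c]) auto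
  have "norm (I k) \<le> c k * Henstock_Kurzweil_Integration.content (cbox a b)" for k
  proof (cases "{a..b} = {}")
    case True
    then show ?thesis using f[of k] by (simp add: interval_cbox)
  next
    case False
    then have "0 \<le> c k" using le[of _ k] norm_ge_zero order_trans by blast
    then show ?thesis
      using has_integral_bound[of "c k" "f k" "I k" a b] f[of k, unfolded interval_cbox] le
      unfolding interval_cbox by blast
  qed
  then have summable_I: "summable (\<lambda>k. norm (I k))"
    by (intro summable_comparison_test[OF _ summable_mult2[OF c]]) auto
  have P: "(P N has_integral (\<Sum>k<N. I k)) {a..b}" for N
    unfolding P_def by (intro has_integral_sum f) auto
  have "norm (P N x) \<le> suminf c" if "x \<in> {a..b}" for N x
  proof -
    have "norm (P N x) \<le> (\<Sum>k<N. c k)"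
      unfolding P_def using le[OF that] by (intro sum_norm_le) auto
    also have "\<dots> \<le> suminf c"
      using c le[OF that] order_trans[OF norm_ge_zero] by (intro sum_le_suminf) auto
    finally show ?thesis .
  qed
  moreover have "(\<lambda>N. P N x) \<longlonglongrightarrow> (\<Sum>k. f k x)" if "x \<in> {a..b}" for x
    unfolding P_def using summable_LIMSEQ[OF summable_norm_cancel[OF summable_f[OF that]]] .
  ultimately have "(\<lambda>x. \<Sum>k. f k x) integrable_on {a..b}"
    "(\<lambda>N. integral {a..b} (P N)) \<longlonglongrightarrow> integral {a..b} (\<lambda>x. \<Sum>k. f k x)"
    using dominated_convergence[of P "{a..b}" "\<lambda>_. suminf c" "\<lambda>x. \<Sum>k. f k x",
        OF has_integral_integrable[OF P] integrable_const_ivl] by auto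
  moreover have "(\<lambda>N. integral {a..b} (P N)) \<longlonglongrightarrow> (\<Sum>k. I k)"
    using summable_LIMSEQ[OF summable_norm_cancel[OF summable_I]] by (simp add: integral_unique[OF P])
  ultimately show ?thesis
    using LIMSEQ_unique by (metis integrable_integral)
qed

lemma integral_shift_periodic:
  fixes G :: "real \<Rightarrow> 'a::banach"
  assumes cont: "continuous_on UNIV G" and periodic: "\<And>x. G (x + c) = G x"
    and \<alpha>: "0 \<le> \<alpha>" "\<alpha> \<le> c"
  shows "integral {0..c} (\<lambda>\<theta>. G (\<theta> + \<alpha>)) = integral {0..c} G"
proof -
  have int: "G integrable_on {u..v}" for u v
    by (rule integrable_continuous_interval) (use cont continuous_on_subset in blast)
  have "integral {0..c} (\<lambda>\<theta>. G (\<theta> + \<alpha>)) = integral {\<alpha>..c+\<alpha>} G"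
    using integral_shift_Icc_real[of 0 c G \<alpha>] by (simp add: o_def add.commute)
  also have "\<dots> = integral {\<alpha>..c} G + integral {c..c+\<alpha>} G"
    using Henstock_Kurzweil_Integration.integral_combine[of \<alpha> c "c+\<alpha>" G] \<alpha> int by simp
  also have "integral {c..c+\<alpha>} G = integral {0..\<alpha>} G"
    using integral_shift_Icc_real[of 0 \<alpha> G c] by (simp add: o_def periodic add.commute)
  also have "integral {\<alpha>..c} G + integral {0..\<alpha>} G = integral {0..c} G"
    using Henstock_Kurzweil_Integration.integral_combine[of 0 \<alpha> c G] \<alpha> int by (simp add: add.commute)
  finally show ?thesis .
qed

lemma has_integral_exp_i_int:
  fixes m :: int
  assumes "m \<noteq> 0"
  shows "((\<lambda>\<theta>. exp (\<i> * of_int m * of_real \<theta>)) has_integral 0) {0..2*pi}"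
proof -
  define F where "F w = exp (\<i> * of_int m * w) / (\<i> * of_int m)" for w :: complex
  have F: "(F has_field_derivative exp (\<i> * of_int m * w)) (at w)" for w
    unfolding F_def using assms by (auto intro!: derivative_eq_intros simp: field_simps)
  have "((\<lambda>\<theta>. exp (\<i> * of_int m * of_real \<theta>)) has_integral (F (of_real (2*pi)) - F (of_real 0))) {0..2*pi}"
    by (rule fundamental_theorem_of_calculus) (auto intro!: has_vector_derivative_real_field F)
  moreover have "exp (\<i> * of_int m * of_real (2*pi)) = 1"
    using exp_integer_2pi[of "of_int m"] by (simp add: mult_ac)
  ultimately show ?thesis
    by (simp add: F_def)
qed

lemma countable_exp_i_preimage: "countable {\<theta>::real. exp (\<i> * of_real \<theta>) = w}"
proof (cases "\<exists>\<theta>0. exp (\<i> * of_real \<theta>0) = w")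
  case True
  then obtain \<theta>0 where \<theta>0: "exp (\<i> * of_real \<theta>0) = w" by blast
  have "{\<theta>. exp (\<i> * of_real \<theta>) = w} \<subseteq> range (\<lambda>k::int. \<theta>0 + of_int (2 * k) * pi)"
  proof
    fix \<theta> assume "\<theta> \<in> {\<theta>. exp (\<i> * of_real \<theta>) = w}"
    then have "exp (\<i> * of_real \<theta>) = exp (\<i> * of_real \<theta>0)"
      using \<theta>0 by simp
    then obtain k :: int where "\<i> * of_real \<theta> = \<i> * of_real \<theta>0 + (of_int (2 * k) * pi) * \<i>"
      using exp_eq by blast
    then have "Im (\<i> * of_real \<theta>) = Im (\<i> * of_real \<theta>0 + (of_int (2 * k) * pi) * \<i>)"
      by (rule arg_cong)
    then show "\<theta> \<in> range (\<lambda>k::int. \<theta>0 + of_int (2 * k) * pi)"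
      by simp
  qed
  then show ?thesis
    by (rule countable_subset) (intro countable_image countableI_type)
next
  case False
  then have "{\<theta>. exp (\<i> * of_real \<theta>) = w} = {}"
    by blast
  then show ?thesis
    by (simp only: countable_empty)
qed

lemma has_real_derivative_norm_curve:
  fixes F :: "real \<Rightarrow> 'a::real_inner"
  assumes F: "(F has_vector_derivative F') (at x)" and nz: "F x \<noteq> 0"
  shows "((\<lambda>t. norm (F t)) has_real_derivative inner F' (sgn (F x))) (at x)"
proof -
  have "((\<lambda>t. norm (F t)) has_derivative (\<lambda>h. inner h (sgn (F x))) \<circ> (\<lambda>h. h *\<^sub>R F')) (at x)"
    using diff_chain_at[OF F[unfolded has_vector_derivative_def] has_derivative_norm[OF nz]]
    by (simp add: o_def)
  moreover have "(\<lambda>h. inner h (sgn (F x))) \<circ> (\<lambda>h. h *\<^sub>R F') = (*) (inner F' (sgn (F x)))"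
    by (auto simp: fun_eq_iff)
  ultimately show ?thesis
    by (simp add: has_field_derivative_def)
qed

lemma annulus_maximum_modulus:
  fixes G :: "complex \<Rightarrow> complex"
  assumes holo: "G holomorphic_on S" and sub: "cball 0 r2 - ball 0 r1 \<subseteq> S"
    and z: "r1 \<le> norm z" "norm z \<le> r2"
    and bound: "\<And>w. norm w = r1 \<or> norm w = r2 \<Longrightarrow> norm (G w) \<le> B"
  shows "norm (G z) \<le> B"
proof (rule maximum_modulus_frontier[of G "cball 0 r2 - ball 0 r1"])
  let ?A = "cball (0::complex) r2 - ball 0 r1"
  have closed: "closure ?A = ?A"
    by (intro closure_closed closed_Diff) auto
  have interior: "ball 0 r2 - cball 0 r1 \<subseteq> interior ?A"
    by (intro interior_maximal open_Diff) auto
  show "G holomorphic_on interior ?A"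
    using holomorphic_on_subset[OF holo] sub interior_subset by blast
  show "continuous_on (closure ?A) G"
    unfolding closed using holomorphic_on_imp_continuous_on[OF holomorphic_on_subset[OF holo sub]] .
  show "bounded ?A"
    by (rule bounded_subset[OF bounded_cball]) auto
  show "z \<in> ?A"
    using z by auto
  fix w assume "w \<in> frontier ?A"
  then have "w \<in> ?A" "w \<notin> ball 0 r2 - cball 0 r1"
    using interior closed by (auto simp: frontier_def)
  then show "norm (G w) \<le> B"
    by (intro bound) auto
qed

lemma convex_on_cong:
  assumes "\<And>x. x \<in> S \<Longrightarrow> f x = g x" and "convex_on S g"
  shows "convex_on S f"
  using assms by (auto simp: convex_on_def convex_def)

lemma convex_on_if_tilted_le_max:
  fixes h :: "real \<Rightarrow> real"
  assumes D: "convex D"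
    and tilted: "\<And>\<beta> x t y. \<beta> \<in> \<rat> \<Longrightarrow> x \<in> D \<Longrightarrow> y \<in> D \<Longrightarrow> x < t \<Longrightarrow> t < y \<Longrightarrow>
       h t + \<beta> * t \<le> max (h x + \<beta> * x) (h y + \<beta> * y)"
  shows "convex_on D h"
proof (rule convex_on_linorderI[OF _ D])
  fix u x y :: real
  assume u: "0 < u" "u < 1" and xy: "x \<in> D" "y \<in> D" "x < y"
  define t where "t = (1 - u) * x + u * y"
  have t: "x < t" "t < y"
    using u xy mult_strict_left_mono[of x y u] mult_strict_left_mono[of x y "1 - u"]
    by (auto simp: t_def algebra_simps)
  \<comment> \<open>The tilted inequality is closed in \<open>\<beta>\<close>, so it extends from \<open>\<rat>\<close> to all reals.\<close>
  have "closure \<rat> \<subseteq> {\<beta>. h t + \<beta> * t \<le> max (h x + \<beta> * x) (h y + \<beta> * y)}"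
    by (intro closure_minimal subsetI CollectI tilted closed_Collect_le continuous_intros)
       (use xy t in auto)
  then have real_tilted: "h t + \<beta> * t \<le> max (h x + \<beta> * x) (h y + \<beta> * y)" for \<beta>
    by (auto simp: Rats_closure_real)
  \<comment> \<open>The slope of the chord makes both endpoint values equal.\<close>
  define \<beta> where "\<beta> = (h x - h y) / (y - x)"
  have "h x + \<beta> * x = h y + \<beta> * y"
    using xy by (simp add: \<beta>_def field_simps)
  then have "h t \<le> h x + \<beta> * (x - t)"
    using real_tilted[of \<beta>] by (simp add: algebra_simps)
  also have "\<dots> = (1 - u) * h x + u * h y"
    using xy by (simp add: \<beta>_def t_def field_simps)
  finally show "h ((1 - u) *\<^sub>R x + u *\<^sub>R y) \<le> (1 - u) * h x + u * h y"
    by (simp add: t_def)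
qed

lemma C1_differentiable_on_inverse_monomial:
  fixes c :: real
  assumes c: "c \<noteq> 0" and S: "\<And>r. r \<in> S \<Longrightarrow> 0 < r"
  shows "(\<lambda>r. inverse (c * r ^ n)) C1_differentiable_on S"
proof -
  define D where "D r = - (inverse (c * r ^ n) * (c * (real n * r ^ (n - 1))) * inverse (c * r ^ n))" for r
  have "((\<lambda>r. inverse (c * r ^ n)) has_vector_derivative D r) (at r)" if "r \<in> S" for r
  proof -
    have "((\<lambda>r. c * r ^ n) has_real_derivative c * (real n * r ^ (n - 1))) (at r)"
      by (auto intro!: derivative_eq_intros)
    then have "((\<lambda>r. inverse (c * r ^ n)) has_real_derivative D r) (at r)"
      unfolding D_def by (rule DERIV_inverse') (use c S[OF that] in simp)
    then show ?thesis
      by (simp add: has_real_derivative_iff_has_vector_derivative)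
  qed
  moreover have "continuous_on S D"
    unfolding D_def by (intro continuous_intros) (use c S in fastforce)+
  ultimately show ?thesis
    unfolding C1_differentiable_on_def by blast
qed

section \<open>The Taylor series on circles\<close>

lemma taylor_fun_eq_eval_fps: "taylor_fun a = eval_fps (Abs_fps a)"
  by (simp add: fun_eq_iff taylor_fun_def eval_fps_def)

lemma holomorphic_on_taylor_fun: "taylor_fun a holomorphic_on eball 0 (conv_radius a)"
  unfolding taylor_fun_eq_eval_fps by (rule holomorphic_on_eval_fps) (simp add: fps_conv_radius_def)

lemma taylor_fun_sums:
  assumes "ereal (norm z) < conv_radius a"
  shows "(\<lambda>k. a k * z ^ k) sums taylor_fun a z"
  unfolding taylor_fun_def using summable_in_conv_radius[OF assms] by (rule summable_sums)

lemma continuous_on_taylor_fun_circle: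
  assumes "ereal (norm z) < conv_radius a"
  shows "continuous_on UNIV (\<lambda>\<theta>::real. taylor_fun a (z * exp (\<i> * of_real \<theta>)))"
  using assms
  by (intro continuous_on_compose2[OF holomorphic_on_imp_continuous_on[OF holomorphic_on_taylor_fun]]
        continuous_intros) (auto simp: norm_mult)

lemma taylor_fun_deriv_bounded_near:
  assumes "ereal r0 < conv_radius a"
  obtains \<rho> B where "r0 < \<rho>" "ereal \<rho> < conv_radius a"
    "\<And>z. z \<in> cball 0 \<rho> \<Longrightarrow> norm (deriv (taylor_fun a) z) \<le> B"
proof -
  obtain \<rho> where \<rho>: "ereal r0 < ereal \<rho>" "ereal \<rho> < conv_radius a"
    using ereal_dense2[OF assms] by blast
  have "cball 0 \<rho> \<subseteq> eball (0::complex) (conv_radius a)"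
  proof
    fix z :: complex assume "z \<in> cball 0 \<rho>"
    then show "z \<in> eball 0 (conv_radius a)"
      using ereal_less_le[OF \<rho>(2)] by simp
  qed
  then have "compact (deriv (taylor_fun a) ` cball 0 \<rho>)"
    by (intro compact_continuous_image holomorphic_on_imp_continuous_on
        holomorphic_on_subset[OF holomorphic_deriv[OF holomorphic_on_taylor_fun open_eball]]) auto
  then obtain B where "\<forall>w \<in> deriv (taylor_fun a) ` cball 0 \<rho>. norm w \<le> B"
    using compact_imp_bounded bounded_iff by blast
  then show ?thesis
    using that[of \<rho> B] \<rho> by simp
qed

lemma integral_norm_taylor_fun_circle:
  assumes "ereal (norm z) < conv_radius a"
  shows "integral {0..2*pi} (\<lambda>\<theta>. cmod (taylor_fun a (z * exp (\<i> * of_real \<theta>))))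
       = 2 * pi * M1 a (norm z)"
proof -
  define G where "G \<theta> = cmod (taylor_fun a (of_real (norm z) * exp (\<i> * of_real \<theta>)))" for \<theta>
  define \<alpha> where "\<alpha> = Arg2pi z"
  have z: "z = of_real (norm z) * exp (\<i> * of_real \<alpha>)"
    unfolding \<alpha>_def by (rule Arg2pi_eq)
  have "exp (\<i> * of_real (x + 2*pi)) = exp (\<i> * of_real x)" for x
    by (simp add: distrib_left exp_add mult.commute[of \<i>])
  then have periodic: "G (x + 2*pi) = G x" for x
    by (simp add: G_def)
  have "integral {0..2*pi} (\<lambda>\<theta>. cmod (taylor_fun a (z * exp (\<i> * of_real \<theta>))))
      = integral {0..2*pi} (\<lambda>\<theta>. G (\<theta> + \<alpha>))"
    by (subst z) (simp add: G_def distrib_left exp_add mult_ac)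
  also have "\<dots> = integral {0..2*pi} G"
    using Arg2pi_ge_0[of z] Arg2pi_lt_2pi[of z] assms
    unfolding G_def
    by (intro integral_shift_periodic periodic[unfolded G_def] continuous_on_norm
        continuous_on_taylor_fun_circle) (auto simp: \<alpha>_def)
  finally show ?thesis
    by (simp add: M1_def G_def[abs_def])
qed

lemma M1_nonneg: "0 \<le> M1 a r"
  unfolding M1_def
  by (cases "(\<lambda>\<theta>. cmod (taylor_fun a (of_real r * exp (\<i> * of_real \<theta>)))) integrable_on {0..2*pi}")
    (auto intro!: divide_nonneg_pos integral_nonneg simp: not_integrable_integral)

section \<open>Pairing with bounded weights\<close>

definition unit_weight :: "(real \<Rightarrow> complex) \<Rightarrow> bool" where
  "unit_weight \<phi> \<longleftrightarrow> \<phi> \<in> borel_measurable (lebesgue_on {0..2*pi}) \<and> (\<forall>\<theta>. norm (\<phi> \<theta>) \<le> 1)"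

definition circle_moment :: "(real \<Rightarrow> complex) \<Rightarrow> nat \<Rightarrow> complex" where
  "circle_moment \<phi> k = integral {0..2*pi} (\<lambda>\<theta>. exp (\<i> * of_real \<theta>) ^ k * \<phi> \<theta>)"

definition circle_pairing :: "(nat \<Rightarrow> complex) \<Rightarrow> (real \<Rightarrow> complex) \<Rightarrow> complex \<Rightarrow> complex" where
  "circle_pairing a \<phi> z = integral {0..2*pi} (\<lambda>\<theta>. taylor_fun a (z * exp (\<i> * of_real \<theta>)) * \<phi> \<theta>)"

lemma unit_weight_continuous:
  assumes "continuous_on {0..2*pi} \<phi>" "\<And>\<theta>. norm (\<phi> \<theta>) \<le> 1"
  shows "unit_weight \<phi>"
  using assms by (auto simp: unit_weight_def intro!: continuous_imp_measurable_on_sets_lebesgue)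

lemma integrable_mult_unit_weight:
  assumes "unit_weight \<phi>" "continuous_on {0..2*pi} g"
  shows "(\<lambda>\<theta>. g \<theta> * \<phi> \<theta>) integrable_on {0..2*pi}"
proof -
  have "(\<lambda>\<theta>. \<phi> \<theta> * g \<theta>) absolutely_integrable_on {0..2*pi}"
    using assms
    by (intro absolutely_integrable_bounded_measurable_product[OF bilinear_times]
          absolutely_integrable_continuous_real) (auto simp: unit_weight_def bounded_iff)
  then show ?thesis
    by (simp add: mult.commute absolutely_integrable_on_def)
qed

lemma norm_circle_moment_le:
  assumes "unit_weight \<phi>"
  shows "norm (circle_moment \<phi> k) \<le> 2 * pi"
proof -
  have "(\<lambda>\<theta>. exp (\<i> * of_real \<theta>) ^ k * \<phi> \<theta>) integrable_on {0..2*pi}"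
    by (intro integrable_mult_unit_weight assms continuous_intros)
  then have "norm (circle_moment \<phi> k) \<le> integral {0..2*pi} (\<lambda>_. 1::real)"
    unfolding circle_moment_def using assms
    by (intro integral_norm_bound_integral) (auto simp: unit_weight_def norm_mult norm_power)
  then show ?thesis by simp
qed

lemma has_integral_circle_pairing_suminf:
  assumes z: "ereal (norm z) < conv_radius a" and \<phi>: "unit_weight \<phi>"
  shows "((\<lambda>\<theta>. taylor_fun a (z * exp (\<i> * of_real \<theta>)) * \<phi> \<theta>)
           has_integral (\<Sum>k. a k * circle_moment \<phi> k * z ^ k)) {0..2*pi}"
proof -
  let ?e = "\<lambda>\<theta>::real. exp (\<i> * of_real \<theta>)"
  have "((\<lambda>\<theta>. \<Sum>k. a k * z ^ k * (?e \<theta> ^ k * \<phi> \<theta>))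
          has_integral (\<Sum>k. a k * z ^ k * circle_moment \<phi> k)) {0..2*pi}"
  proof (rule has_integral_suminf_bounded)
    show "((\<lambda>\<theta>. a k * z ^ k * (?e \<theta> ^ k * \<phi> \<theta>)) has_integral a k * z ^ k * circle_moment \<phi> k) {0..2*pi}" for k
      unfolding circle_moment_def
      by (intro has_integral_mult_right integrable_integral integrable_mult_unit_weight \<phi> continuous_intros)
    show "norm (a k * z ^ k * (?e \<theta> ^ k * \<phi> \<theta>)) \<le> norm (a k * z ^ k)" for k \<theta>
      using \<phi> by (auto simp: unit_weight_def norm_mult norm_power intro: mult_left_le)
    show "summable (\<lambda>k. norm (a k * z ^ k))"
      by (rule abs_summable_in_conv_radius[OF z])
  qed
  moreover have "(\<Sum>k. a k * z ^ k * (?e \<theta> ^ k * \<phi> \<theta>)) = taylor_fun a (z * ?e \<theta>) * \<phi> \<theta>" for \<theta>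
  proof -
    have "(\<lambda>k. a k * (z * ?e \<theta>) ^ k) sums taylor_fun a (z * ?e \<theta>)"
      by (rule taylor_fun_sums) (use z in \<open>simp add: norm_mult\<close>)
    then have "(\<lambda>k. a k * (z * ?e \<theta>) ^ k * \<phi> \<theta>) sums (taylor_fun a (z * ?e \<theta>) * \<phi> \<theta>)"
      by (rule sums_mult2)
    moreover have "a k * (z * ?e \<theta>) ^ k * \<phi> \<theta> = a k * z ^ k * (?e \<theta> ^ k * \<phi> \<theta>)" for k
      by (simp add: power_mult_distrib mult.assoc)
    ultimately show ?thesis
      by (simp add: sums_iff)
  qed
  ultimately show ?thesis
    by (simp add: mult_ac)
qed

lemma holomorphic_on_circle_pairing:
  assumes \<phi>: "unit_weight \<phi>"
  shows "circle_pairing a \<phi> holomorphic_on eball 0 (conv_radius a)"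
proof -
  define b where "b k = a k * circle_moment \<phi> k" for k
  have "conv_radius a \<le> conv_radius b"
  proof (rule conv_radius_geI_ex')
    fix r :: real assume "0 < r" "ereal r < conv_radius a"
    then have "summable (\<lambda>k. norm (a k * of_real r ^ k))"
      by (intro abs_summable_in_conv_radius) simp
    then have bound: "summable (\<lambda>k. 2 * pi * norm (a k * of_real r ^ k))"
      by (rule summable_mult)
    have "norm (b k * of_real r ^ k) \<le> 2 * pi * norm (a k * of_real r ^ k)" for k
    proof -
      have "norm (b k * of_real r ^ k) = norm (circle_moment \<phi> k) * norm (a k * of_real r ^ k)"
        by (simp add: b_def norm_mult)
      also have "\<dots> \<le> 2 * pi * norm (a k * of_real r ^ k)"
        by (intro mult_right_mono norm_circle_moment_le \<phi> norm_ge_zero)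
      finally show ?thesis .
    qed
    then show "summable (\<lambda>k. b k * of_real r ^ k)"
      by (intro summable_norm_cancel[OF summable_comparison_test[OF _ bound]]) auto
  qed
  then have "eval_fps (Abs_fps b) holomorphic_on eball 0 (conv_radius a)"
    by (intro holomorphic_on_subset[OF holomorphic_on_eval_fps]) (auto simp: fps_conv_radius_def)
  moreover have "eval_fps (Abs_fps b) z = circle_pairing a \<phi> z" if "z \<in> eball 0 (conv_radius a)" for z
    using has_integral_circle_pairing_suminf[OF _ \<phi>, of z a] that
    by (simp add: circle_pairing_def eval_fps_def b_def integral_unique)
  ultimately show ?thesis
    by (rule holomorphic_transform)
qed

lemma norm_circle_pairing_le:
  assumes z: "ereal (norm z) < conv_radius a" and \<phi>: "unit_weight \<phi>"
  shows "norm (circle_pairing a \<phi> z) \<le> 2 * pi * M1 a (norm z)"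
proof -
  have "norm (circle_pairing a \<phi> z) \<le> integral {0..2*pi} (\<lambda>\<theta>. cmod (taylor_fun a (z * exp (\<i> * of_real \<theta>))))"
    unfolding circle_pairing_def
  proof (rule integral_norm_bound_integral)
    show "(\<lambda>\<theta>. taylor_fun a (z * exp (\<i> * of_real \<theta>)) * \<phi> \<theta>) integrable_on {0..2*pi}"
      using has_integral_circle_pairing_suminf[OF z \<phi>] by blast
    show "(\<lambda>\<theta>. cmod (taylor_fun a (z * exp (\<i> * of_real \<theta>)))) integrable_on {0..2*pi}"
      by (intro integrable_continuous_interval continuous_on_norm
          continuous_on_subset[OF continuous_on_taylor_fun_circle[OF z]]) auto
    show "norm (taylor_fun a (z * exp (\<i> * of_real \<theta>)) * \<phi> \<theta>) \<le> cmod (taylor_fun a (z * exp (\<i> * of_real \<theta>)))" for \<theta>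
      using \<phi> by (auto simp: unit_weight_def norm_mult intro: mult_left_le)
  qed
  then show ?thesis
    by (simp add: integral_norm_taylor_fun_circle[OF z])
qed

lemma circle_pairing_sgn_cnj:
  assumes r: "0 \<le> r" "ereal r < conv_radius a"
  defines "\<phi> \<equiv> \<lambda>\<theta>. sgn (cnj (taylor_fun a (of_real r * exp (\<i> * of_real \<theta>))))"
  shows "unit_weight \<phi>" and "circle_pairing a \<phi> (of_real r) = of_real (2 * pi * M1 a r)"
proof -
  have z: "ereal (norm (complex_of_real r)) < conv_radius a"
    using r by simp
  have "(\<lambda>\<theta>. cnj (taylor_fun a (of_real r * exp (\<i> * of_real \<theta>)))) \<in> borel_measurable (lebesgue_on {0..2*pi})"
    by (intro continuous_imp_measurable_on_sets_lebesgue continuous_on_cnj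
        continuous_on_subset[OF continuous_on_taylor_fun_circle[OF z]]) auto
  then show \<phi>: "unit_weight \<phi>"
    unfolding unit_weight_def \<phi>_def by (auto simp: norm_sgn intro: measurable_compose[OF _ borel_measurable_sgn])
  have "w * sgn (cnj w) = of_real (cmod w)" for w :: complex
    by (cases "w = 0") (simp_all add: sgn_eq complex_norm_square[symmetric] power2_eq_square)
  then have "circle_pairing a \<phi> (of_real r)
      = integral {0..2*pi} (\<lambda>\<theta>. of_real (cmod (taylor_fun a (of_real r * exp (\<i> * of_real \<theta>)))))"
    by (simp add: circle_pairing_def \<phi>_def)
  also have "\<dots> = of_real (integral {0..2*pi} (\<lambda>\<theta>. cmod (taylor_fun a (of_real r * exp (\<i> * of_real \<theta>)))))"
    by (intro integral_unique has_integral_of_real integrable_integral integrable_continuous_interval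
        continuous_on_norm continuous_on_subset[OF continuous_on_taylor_fun_circle[OF z]]) auto
  also have "\<dots> = of_real (2 * pi * M1 a r)"
    using integral_norm_taylor_fun_circle[OF z] r by simp
  finally show "circle_pairing a \<phi> (of_real r) = of_real (2 * pi * M1 a r)" .
qed

lemma circle_moment_cnj_power:
  "circle_moment (\<lambda>\<theta>. cnj (exp (\<i> * of_real \<theta>)) ^ n) k = (if k = n then 2 * pi else 0)"
proof -
  have "exp (\<i> * of_real \<theta>) ^ k * cnj (exp (\<i> * of_real \<theta>)) ^ n
      = exp (\<i> * of_int (int k - int n) * of_real \<theta>)" for \<theta>
    by (simp add: exp_cnj exp_of_nat_mult[symmetric] exp_add[symmetric] algebra_simps)
  then show ?thesis
    using has_integral_exp_i_int[of "int k - int n"]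
    by (auto simp: circle_moment_def integral_unique scaleR_conv_of_real)
qed

lemma norm_coeff_le_M1:
  assumes "0 \<le> r" "ereal r < conv_radius a"
  shows "cmod (a n) * r ^ n \<le> M1 a r"
proof -
  define \<phi> where "\<phi> = (\<lambda>\<theta>. cnj (exp (\<i> * of_real \<theta>)) ^ n)"
  have \<phi>: "unit_weight \<phi>"
    unfolding \<phi>_def by (intro unit_weight_continuous continuous_intros) (simp add: norm_power)
  have z: "ereal (norm (complex_of_real r)) < conv_radius a"
    using assms by simp
  have "(\<lambda>k. a k * circle_moment \<phi> k * of_real r ^ k) = (\<lambda>k. if k = n then a n * (2 * pi) * of_real r ^ n else 0)"
    by (auto simp: \<phi>_def circle_moment_cnj_power)
  then have "(\<Sum>k. a k * circle_moment \<phi> k * of_real r ^ k) = a n * (2 * pi) * of_real r ^ n"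
    using sums_single[of n "\<lambda>_. a n * (2 * pi) * of_real r ^ n"] by (simp add: sums_iff)
  then have "circle_pairing a \<phi> (of_real r) = a n * (2 * pi) * of_real r ^ n"
    using has_integral_circle_pairing_suminf[OF z \<phi>] by (simp add: circle_pairing_def integral_unique)
  then have "norm (a n * (2 * pi) * of_real r ^ n) \<le> 2 * pi * M1 a r"
    using norm_circle_pairing_le[OF z \<phi>] assms by simp
  then show ?thesis
    using assms by (simp add: norm_mult norm_power)
qed

lemma M1_pos:
  assumes "a n \<noteq> 0" "0 < r" "ereal r < conv_radius a"
  shows "0 < M1 a r"
  using assms by (intro less_le_trans[OF _ norm_coeff_le_M1[of r a n]]) auto

section \<open>Log-convexity of the mean modulus\<close>

lemma M1_three_circles:
  fixes p :: int and q :: nat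
  assumes r: "0 < r1" "r1 \<le> r" "r \<le> r2" and R: "ereal r2 < conv_radius a"
  shows "M1 a r ^ q * r powi p \<le> max (M1 a r1 ^ q * r1 powi p) (M1 a r2 ^ q * r2 powi p)"
proof -
  have "0 \<le> r" "ereal r < conv_radius a"
    using r ereal_less_le[OF R] by auto
  then obtain \<phi> where \<phi>: "unit_weight \<phi>"
    and attain: "circle_pairing a \<phi> (of_real r) = of_real (2 * pi * M1 a r)"
    using circle_pairing_sgn_cnj by blast
  define G where "G z = circle_pairing a \<phi> z ^ q * z powi p" for z
  define B where "B = max (M1 a r1 ^ q * r1 powi p) (M1 a r2 ^ q * r2 powi p)"
  have annulus: "cball 0 r2 - ball 0 r1 \<subseteq> eball 0 (conv_radius a) - {0}"
    using r ereal_less_le[OF R] by auto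
  have "norm (G (of_real r)) \<le> (2 * pi) ^ q * B"
  proof (rule annulus_maximum_modulus[of G _ r2 r1])
    show "G holomorphic_on eball 0 (conv_radius a) - {0}"
      unfolding G_def
      by (intro holomorphic_intros holomorphic_on_subset[OF holomorphic_on_circle_pairing[OF \<phi>]]) auto
    fix w :: complex assume w: "norm w = r1 \<or> norm w = r2"
    then have "ereal (norm w) < conv_radius a"
      using r ereal_less_le[OF R] by auto
    then have "norm (G w) \<le> (2 * pi * M1 a (norm w)) ^ q * norm w powi p"
      by (auto simp: G_def norm_mult norm_power norm_power_int
          intro!: mult_right_mono power_mono norm_circle_pairing_le \<phi>)
    also have "\<dots> \<le> (2 * pi) ^ q * B"
      using w by (auto simp: B_def power_mult_distrib intro!: mult_left_mono)
    finally show "norm (G w) \<le> (2 * pi) ^ q * B" .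
  qed (use annulus r in auto)
  moreover have "norm (G (of_real r)) = (2 * pi) ^ q * (M1 a r ^ q * r powi p)"
    using r M1_nonneg[of a r]
    by (simp add: G_def attain norm_mult norm_power norm_power_int power_mult_distrib)
  ultimately show ?thesis
    by (simp add: B_def)
qed

lemma ln_M1_exp_tilted_le_max:
  assumes an: "a n \<noteq> 0" and \<beta>: "\<beta> \<in> \<rat>" and t: "t1 < t" "t < t2"
    and R: "ereal (exp t2) < conv_radius a"
  shows "ln (M1 a (exp t)) + \<beta> * t \<le> max (ln (M1 a (exp t1)) + \<beta> * t1) (ln (M1 a (exp t2)) + \<beta> * t2)"
proof -
  obtain p q' where q': "q' > 0" and \<beta>_eq: "\<beta> = of_int p / of_int q'"
    using \<beta> by (rule Rats_cases')
  define q where "q = nat q'"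
  define v where "v s = ln (M1 a (exp s)) + \<beta> * s" for s
  have q: "q > 0" "real q = of_int q'"
    using q' by (simp_all add: q_def)
  have M1_exp_pos: "0 < M1 a (exp s)" if "s \<le> t2" for s
    using ereal_less_le[OF R] that by (intro M1_pos[where a = a and n = n, OF an]) auto
  have ln_eq: "ln (M1 a (exp s) ^ q * exp s powi p) = q * v s" if "s \<le> t2" for s
    using M1_exp_pos[OF that] q by (simp add: v_def \<beta>_eq ln_mult ln_realpow exp_power_int field_simps)
  have "M1 a (exp t) ^ q * exp t powi p \<le> max (M1 a (exp t1) ^ q * exp t1 powi p) (M1 a (exp t2) ^ q * exp t2 powi p)"
    using t R by (intro M1_three_circles) auto
  then have "ln (M1 a (exp t) ^ q * exp t powi p)
      \<le> max (ln (M1 a (exp t1) ^ q * exp t1 powi p)) (ln (M1 a (exp t2) ^ q * exp t2 powi p))"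
    using M1_exp_pos t by (auto simp: max_def)
  then have "q * v t \<le> q * max (v t1) (v t2)"
    using t by (simp add: ln_eq max_mult_distrib_left)
  then show ?thesis
    using q by (simp add: v_def)
qed

lemma convex_on_ln_M1_exp:
  assumes "a n \<noteq> 0"
  shows "convex_on {t. ereal (exp t) < conv_radius a} (\<lambda>t. ln (M1 a (exp t)))"
proof (rule convex_on_if_tilted_le_max)
  show "convex {t. ereal (exp t) < conv_radius a}"
    unfolding is_interval_convex_1[symmetric] is_interval_1 by (auto intro: ereal_less_le)
qed (use assms ln_M1_exp_tilted_le_max in auto)

section \<open>Differentiability of the mean modulus\<close>

lemma finite_taylor_fun_zeros_sphere:
  assumes an: "a n \<noteq> 0" and r: "0 < r" "ereal r < conv_radius a"
  shows "finite {w \<in> sphere 0 r. taylor_fun a w = 0}"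
proof (cases "taylor_fun a constant_on eball 0 (conv_radius a)")
  case True
  then obtain c where c: "\<And>w. w \<in> eball 0 (conv_radius a) \<Longrightarrow> taylor_fun a w = c"
    by (auto simp: constant_on_def)
  have "c \<noteq> 0"
  proof
    assume "c = 0"
    then have "M1 a r = 0"
      using r c by (simp add: M1_def norm_mult)
    then show False
      using M1_pos[OF an r] by simp
  qed
  then have "{w \<in> sphere 0 r. taylor_fun a w = 0} = {}"
    using c r by auto
  then show ?thesis
    by (simp only: finite.emptyI)
next
  case False
  then show ?thesis
    using r by (intro holomorphic_compact_finite_zeros[OF holomorphic_on_taylor_fun]) auto
qed

lemma negligible_circle_zeros:
  assumes an: "a n \<noteq> 0" and r: "0 < r" "ereal r < conv_radius a"
  shows "negligible {\<theta>. taylor_fun a (of_real r * exp (\<i> * of_real \<theta>)) = 0}"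
proof -
  let ?Z = "{w \<in> sphere 0 r. taylor_fun a w = 0}"
  have "countable (\<Union>w \<in> ?Z. {\<theta>. exp (\<i> * of_real \<theta>) = w / of_real r})"
    by (intro countable_UN[OF countable_finite] finite_taylor_fun_zeros_sphere[OF an r]
        countable_exp_i_preimage)
  moreover have "{\<theta>. taylor_fun a (of_real r * exp (\<i> * of_real \<theta>)) = 0}
      \<subseteq> (\<Union>w \<in> ?Z. {\<theta>. exp (\<i> * of_real \<theta>) = w / of_real r})"
  proof
    fix \<theta> assume "\<theta> \<in> {\<theta>. taylor_fun a (of_real r * exp (\<i> * of_real \<theta>)) = 0}"
    then have "of_real r * exp (\<i> * of_real \<theta>) \<in> ?Z"
      using r by (simp add: norm_mult)
    moreover have "exp (\<i> * of_real \<theta>) = of_real r * exp (\<i> * of_real \<theta>) / of_real r"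
      using r by simp
    ultimately show "\<theta> \<in> (\<Union>w \<in> ?Z. {\<theta>. exp (\<i> * of_real \<theta>) = w / of_real r})"
      by blast
  qed
  ultimately show ?thesis
    by (meson negligible_countable countable_subset)
qed

definition circle_modulus :: "(nat \<Rightarrow> complex) \<Rightarrow> real \<Rightarrow> real \<Rightarrow> real" where
  "circle_modulus a r \<theta> = cmod (taylor_fun a (of_real r * exp (\<i> * of_real \<theta>)))"

definition circle_modulus_deriv :: "(nat \<Rightarrow> complex) \<Rightarrow> real \<Rightarrow> real \<Rightarrow> real" where
  "circle_modulus_deriv a r \<theta> =
     inner (exp (\<i> * of_real \<theta>) * deriv (taylor_fun a) (of_real r * exp (\<i> * of_real \<theta>)))
       (sgn (taylor_fun a (of_real r * exp (\<i> * of_real \<theta>))))"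

definition M1_deriv :: "(nat \<Rightarrow> complex) \<Rightarrow> real \<Rightarrow> real" where
  "M1_deriv a r = 1 / (2 * pi) * integral {0..2*pi} (circle_modulus_deriv a r)"

lemma M1_eq_integral_circle_modulus: "M1 a r = 1 / (2 * pi) * integral {0..2*pi} (circle_modulus a r)"
  by (simp add: M1_def circle_modulus_def[abs_def])

lemma integrable_circle_modulus:
  assumes "ereal \<bar>r\<bar> < conv_radius a"
  shows "circle_modulus a r integrable_on {0..2*pi}"
  unfolding circle_modulus_def[abs_def] using assms
  by (intro integrable_continuous_interval continuous_on_norm
      continuous_on_subset[OF continuous_on_taylor_fun_circle]) auto

lemma has_real_derivative_circle_modulus:
  assumes r0: "ereal \<bar>r0\<bar> < conv_radius a"
    and nz: "taylor_fun a (of_real r0 * exp (\<i> * of_real \<theta>)) \<noteq> 0"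
  shows "((\<lambda>r. circle_modulus a r \<theta>) has_real_derivative circle_modulus_deriv a r0 \<theta>) (at r0)"
proof -
  define e where "e = exp (\<i> * of_real \<theta>)"
  have ray: "((\<lambda>r. of_real r * e) has_vector_derivative e) (at r0)"
    using has_vector_derivative_real_field[of "\<lambda>z. z * e" e r0 UNIV]
    by (auto intro!: derivative_eq_intros)
  have f: "(taylor_fun a has_field_derivative deriv (taylor_fun a) (of_real r0 * e)) (at (of_real r0 * e))"
    using r0 by (intro holomorphic_derivI[OF holomorphic_on_taylor_fun open_eball])
      (simp add: e_def norm_mult)
  have "((\<lambda>r. taylor_fun a (of_real r * e)) has_vector_derivative
      e * deriv (taylor_fun a) (of_real r0 * e)) (at r0)"
    using field_vector_diff_chain_at[OF ray f] by (simp add: o_def)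
  from has_real_derivative_norm_curve[OF this] nz show ?thesis
    by (simp add: circle_modulus_def circle_modulus_deriv_def e_def)
qed

lemma abs_circle_modulus_deriv_le:
  "\<bar>circle_modulus_deriv a r \<theta>\<bar> \<le> norm (deriv (taylor_fun a) (of_real r * exp (\<i> * of_real \<theta>)))"
proof -
  have "\<bar>circle_modulus_deriv a r \<theta>\<bar>
      \<le> norm (exp (\<i> * of_real \<theta>) * deriv (taylor_fun a) (of_real r * exp (\<i> * of_real \<theta>)))
        * norm (sgn (taylor_fun a (of_real r * exp (\<i> * of_real \<theta>))))"
    unfolding circle_modulus_deriv_def by (rule Cauchy_Schwarz_ineq2)
  also have "\<dots> \<le> norm (deriv (taylor_fun a) (of_real r * exp (\<i> * of_real \<theta>)))"
    by (simp add: norm_mult norm_sgn mult_left_le)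
  finally show ?thesis .
qed

lemma circle_modulus_deriv_tendsto:
  assumes r0: "ereal \<bar>r0\<bar> < conv_radius a"
    and nz: "taylor_fun a (of_real r0 * exp (\<i> * of_real \<theta>)) \<noteq> 0"
  shows "((\<lambda>r. circle_modulus_deriv a r \<theta>) \<longlongrightarrow> circle_modulus_deriv a r0 \<theta>) (at r0)"
proof -
  define e where "e = exp (\<i> * of_real \<theta>)"
  have r0e: "of_real r0 * e \<in> eball 0 (conv_radius a)"
    using r0 by (simp add: e_def norm_mult)
  have "isCont (taylor_fun a) (of_real r0 * e)" "isCont (deriv (taylor_fun a)) (of_real r0 * e)"
    using holomorphic_on_imp_continuous_on[OF holomorphic_on_taylor_fun]
      holomorphic_on_imp_continuous_on[OF holomorphic_deriv[OF holomorphic_on_taylor_fun open_eball]]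
      r0e continuous_on_eq_continuous_at[OF open_eball] by blast+
  moreover have "((\<lambda>r. of_real r * e) \<longlongrightarrow> of_real r0 * e) (at r0)"
    by (intro tendsto_intros)
  ultimately have "((\<lambda>r. taylor_fun a (of_real r * e)) \<longlongrightarrow> taylor_fun a (of_real r0 * e)) (at r0)"
    "((\<lambda>r. deriv (taylor_fun a) (of_real r * e)) \<longlongrightarrow> deriv (taylor_fun a) (of_real r0 * e)) (at r0)"
    by (auto intro: isCont_tendsto_compose)
  then show ?thesis
    unfolding circle_modulus_deriv_def e_def[symmetric] using nz
    by (intro tendsto_inner tendsto_mult tendsto_const tendsto_sgn) (auto simp: e_def)
qed

lemma circle_modulus_lipschitz:
  assumes \<rho>: "ereal \<rho> < conv_radius a" and B: "\<And>z. z \<in> cball 0 \<rho> \<Longrightarrow> norm (deriv (taylor_fun a) z) \<le> B"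
    and rs: "\<bar>r\<bar> \<le> \<rho>" "\<bar>s\<bar> \<le> \<rho>"
  shows "\<bar>circle_modulus a r \<theta> - circle_modulus a s \<theta>\<bar> \<le> B * \<bar>r - s\<bar>"
proof -
  define e where "e = exp (\<i> * of_real \<theta>)"
  have e: "norm e = 1"
    by (simp add: e_def)
  have "\<bar>circle_modulus a r \<theta> - circle_modulus a s \<theta>\<bar> \<le> norm (taylor_fun a (of_real r * e) - taylor_fun a (of_real s * e))"
    unfolding circle_modulus_def e_def by (rule norm_triangle_ineq3)
  also have "\<dots> \<le> B * norm (of_real r * e - of_real s * e)"
  proof (rule field_differentiable_bound[OF convex_cball])
    fix z :: complex assume "z \<in> cball 0 \<rho>"
    then show "(taylor_fun a has_field_derivative deriv (taylor_fun a) z) (at z within cball 0 \<rho>)"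
      using ereal_less_le[OF \<rho>] by (intro holomorphic_derivI[OF holomorphic_on_taylor_fun open_eball]) auto
  qed (use B rs e in \<open>auto simp: norm_mult\<close>)
  also have "norm (of_real r * e - of_real s * e) = \<bar>r - s\<bar>"
    using e by (simp add: left_diff_distrib[symmetric] norm_mult flip: of_real_diff)
  finally show ?thesis .
qed

lemma has_real_derivative_M1:
  assumes an: "a n \<noteq> 0" and r0: "0 < r0" "ereal r0 < conv_radius a"
  shows "circle_modulus_deriv a r0 integrable_on {0..2*pi}"
    and "(M1 a has_real_derivative M1_deriv a r0) (at r0)"
proof -
  obtain \<rho> B where \<rho>: "r0 < \<rho>" "ereal \<rho> < conv_radius a"
    and B: "\<And>z. z \<in> cball 0 \<rho> \<Longrightarrow> norm (deriv (taylor_fun a) z) \<le> B"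
    using taylor_fun_deriv_bounded_near[OF r0(2)] by blast
  let ?I = "{0<..<\<rho>}"
  let ?N = "{\<theta>. taylor_fun a (of_real r0 * exp (\<i> * of_real \<theta>)) = 0}"
  have I: "ereal \<bar>x\<bar> < conv_radius a" "\<bar>x\<bar> \<le> \<rho>" if "x \<in> ?I" for x
    using that ereal_less_le[OF \<rho>(2)] by auto
  have "open ?I" "r0 \<in> ?I"
    using \<rho> r0 by auto
  moreover have "circle_modulus a x integrable_on {0..2*pi}" if "x \<in> ?I" for x
    using I(1)[OF that] by (rule integrable_circle_modulus)
  moreover have "\<bar>circle_modulus a x \<theta> - circle_modulus a r0 \<theta>\<bar> \<le> B * \<bar>x - r0\<bar>" if "x \<in> ?I" for x \<theta>
    using I[OF that] \<rho> r0 by (intro circle_modulus_lipschitz[OF \<rho>(2) B]) auto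
  moreover have "((\<lambda>x. circle_modulus a x \<theta>) has_real_derivative circle_modulus_deriv a r0 \<theta>) (at r0)"
    if "\<theta> \<in> {0..2*pi} - ?N" for \<theta>
    using that r0 by (intro has_real_derivative_circle_modulus) auto
  ultimately have integrable: "circle_modulus_deriv a r0 integrable_on {0..2*pi}"
    and deriv: "((\<lambda>r. integral {0..2*pi} (circle_modulus a r)) has_real_derivative
        integral {0..2*pi} (circle_modulus_deriv a r0)) (at r0)"
    using has_real_derivative_integral_param_ae[of ?I r0 "circle_modulus a" "{0..2*pi}" "\<lambda>_. B" ?N]
      negligible_circle_zeros[OF an r0] integrable_const_ivl by blast+
  show "circle_modulus_deriv a r0 integrable_on {0..2*pi}"
    by (rule integrable)
  show "(M1 a has_real_derivative M1_deriv a r0) (at r0)"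
    unfolding M1_deriv_def M1_eq_integral_circle_modulus[abs_def] by (rule DERIV_cmult[OF deriv])
qed

lemma isCont_M1_deriv:
  assumes an: "a n \<noteq> 0" and r0: "0 < r0" "ereal r0 < conv_radius a"
  shows "isCont (M1_deriv a) r0"
proof -
  obtain \<rho> B where \<rho>: "r0 < \<rho>" "ereal \<rho> < conv_radius a"
    and B: "\<And>z. z \<in> cball 0 \<rho> \<Longrightarrow> norm (deriv (taylor_fun a) z) \<le> B"
    using taylor_fun_deriv_bounded_near[OF r0(2)] by blast
  let ?I = "{0<..<\<rho>}"
  let ?N = "{\<theta>. taylor_fun a (of_real r0 * exp (\<i> * of_real \<theta>)) = 0}"
  have "open ?I" "r0 \<in> ?I"
    using \<rho> r0 by auto
  moreover have "circle_modulus_deriv a x integrable_on {0..2*pi}" if "x \<in> ?I" for x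
    using that ereal_less_le[OF \<rho>(2)] by (intro has_real_derivative_M1(1)[where a = a and n = n, OF an]) auto
  moreover have "norm (circle_modulus_deriv a x \<theta>) \<le> B" if "x \<in> ?I" for x \<theta>
    using that abs_circle_modulus_deriv_le[of a x \<theta>] B[of "of_real x * exp (\<i> * of_real \<theta>)"]
    by (auto simp: norm_mult)
  moreover have "((\<lambda>x. circle_modulus_deriv a x \<theta>) \<longlongrightarrow> circle_modulus_deriv a r0 \<theta>) (at r0)"
    if "\<theta> \<in> {0..2*pi} - ?N" for \<theta>
    using that r0 by (intro circle_modulus_deriv_tendsto) auto
  ultimately have "isCont (\<lambda>r. integral {0..2*pi} (circle_modulus_deriv a r)) r0"
    using isCont_integral_param_ae[of ?I r0 "circle_modulus_deriv a" "{0..2*pi}" "\<lambda>_. B" ?N]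
      negligible_circle_zeros[OF an r0] integrable_const_ivl by blast
  then show ?thesis
    unfolding M1_deriv_def by (intro continuous_intros)
qed

lemma C1_differentiable_on_M1:
  assumes "a n \<noteq> 0"
  shows "M1 a C1_differentiable_on {r. 0 < r \<and> ereal r < conv_radius a}"
  unfolding C1_differentiable_on_def
proof (intro exI conjI ballI)
  fix r assume "r \<in> {r. 0 < r \<and> ereal r < conv_radius a}"
  then show "(M1 a has_vector_derivative M1_deriv a r) (at r)"
    using has_real_derivative_M1(2)[where a = a and n = n, OF assms]
    by (simp add: has_real_derivative_iff_has_vector_derivative)
next
  show "continuous_on {r. 0 < r \<and> ereal r < conv_radius a} (M1_deriv a)"
    using isCont_M1_deriv[where a = a and n = n, OF assms] by (intro continuous_at_imp_continuous_on) auto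
qed

theorem corollary4p2:
  fixes a :: "nat \<Rightarrow> complex" and n :: nat
  assumes "\<exists>k. a k \<noteq> 0"
    and "conv_radius a > 0"
    and "a n \<noteq> 0"
  shows "(\<lambda>r. kappa a n r) C1_differentiable_on {r. 0 < r \<and> ereal r < conv_radius a}
       \<and> convex_on {t. ereal (exp t) < conv_radius a} (\<lambda>t. ln (kappa a n (exp t)))"
proof
  have "(\<lambda>r. M1 a r * inverse (cmod (a n) * r ^ n))
      C1_differentiable_on {r. 0 < r \<and> ereal r < conv_radius a}"
    using assms(3) by (intro C1_differentiable_on_mult C1_differentiable_on_M1
        C1_differentiable_on_inverse_monomial) auto
  then show "(\<lambda>r. kappa a n r) C1_differentiable_on {r. 0 < r \<and> ereal r < conv_radius a}"
    by (simp add: kappa_def divide_inverse)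
  have "ln (kappa a n (exp t)) = ln (M1 a (exp t)) - (ln (cmod (a n)) + real n * t)"
    if "t \<in> {t. ereal (exp t) < conv_radius a}" for t
  proof -
    have "0 < M1 a (exp t)"
      using that by (intro M1_pos[where a = a and n = n, OF assms(3)]) auto
    then show ?thesis
      using assms(3) by (simp add: kappa_def ln_div ln_mult ln_realpow)
  qed
  moreover have "convex_on {t. ereal (exp t) < conv_radius a}
      (\<lambda>t. ln (M1 a (exp t)) - (ln (cmod (a n)) + real n * t))"
    using convex_on_ln_M1_exp[where a = a and n = n, OF assms(3)]
    by (intro convex_on_diff concave_on_add concave_on_cmul)
      (auto simp: concave_on_const concave_on_ident convex_on_def)
  ultimately show "convex_on {t. ereal (exp t) < conv_radius a} (\<lambda>t. ln (kappa a n (exp t)))"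
    by (rule convex_on_cong)
qed

end
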